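(* Assume the geometric setup and uniform-amplitude model in the context, with $D_{\rm m}<D_{\rm b}$, $r>d_{\rm Fn}$, and $|\sin(\theta-\psi)|\ge c$ for a constant $c>0$. Let $D_{\rm m}^{\rm eff}=D_{\rm m}|\sin(\theta-\psi)|$. Then $$\|\mathbf{J}_\psi\|_{\mathsf F}^2=\frac{N_{\rm b}N_{\rm m}(D_{\rm m}^{\rm eff})^2}{48r^2}\Big(1+\frac{2}{N_{\rm m}-1}\Big)\big(1+\mathcal{O}(N_{\rm b}^{-1})\big),$$ and consequently, for any full-row-rank $\mathbf{Q}\in\mathbb{C}^{N_{\rm rf}\times N_{\rm b}}$ and $P_{\rm m},\sigma_{\rm o}^2>0$, the average Fisher information $\bar F_\psi=\frac{2P_{\rm m}}{\sigma_{\rm o}^2N_{\rm m}}\|\mathbf{P}_{\mathbf{Q}}\mathbf{J}_\psi\|_{\mathsf F}^2$ satisfies $$\bar F_\psi\le\frac{2P_{\rm m}}{\sigma_{\rm o}^2N_{\rm m}}\|\mathbf{J}_\psi\|_{\mathsf F}^2=\frac{P_{\rm m}N_{\rm b}(D_{\rm m}^{\rm eff})^2}{24\sigma_{\rm o}^2r^2}\Big(1+\frac{2}{N_{\rm m}-1}\Big)\big(1+\mathcal{O}(N_{\rm b}^{-1})\big).$$ Here $\mathcal{O}(N_{\rm b}^{-1})$ denotes a quantity bounded in absolute value by $C/N_{\rm b}$ with $C$ depending only on $c$, uniformly over $\lambda$, $N_{\rm m}$ and poses satisfying the hypotheses.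
   Context: Geometric setup: wavelength $\lambda>0$; BS and MS uniform linear arrays with odd numbers of antennas $N_{\rm b}=2\bar N_{\rm b}+1\ge3$ and $N_{\rm m}=2\bar N_{\rm m}+1\ge3$, spacings $d_{\rm b}=d_{\rm m}=\lambda/2$, apertures $D_{\rm b}=(N_{\rm b}-1)d_{\rm b}$, $D_{\rm m}=(N_{\rm m}-1)d_{\rm m}$. BS antenna $n_{\rm b}\in\{-\bar N_{\rm b},\dots,\bar N_{\rm b}\}$ sits at $(0,n_{\rm b}d_{\rm b})$; for MS pose $(x,y,\psi)$, MS antenna $n_{\rm m}\in\{-\bar N_{\rm m},\dots,\bar N_{\rm m}\}$ sits at $(x+n_{\rm m}d_{\rm m}\cos\psi,\;y+n_{\rm m}d_{\rm m}\sin\psi)$, and $r_{n_{\rm b},n_{\rm m}}=\sqrt{(x+n_{\rm m}d_{\rm m}\cos\psi)^2+(y+n_{\rm m}d_{\rm m}\sin\psi-n_{\rm b}d_{\rm b})^2}$. Let $r=\sqrt{x^2+y^2}>0$ and $\theta$ be the polar angle with $x=r\cos\theta$, $y=r\sin\theta$. Fresnel distance: $d_{\rm Fn}=0.62\sqrt{D_{\rm b}^3/\lambda}$. Uniform-amplitude channel: $\mathbf{H}\in\mathbb{C}^{N_{\rm b}\times N_{\rm m}}$ with rows indexed by $n_{\rm b}$ and columns by $n_{\rm m}$ (both increasing), entries $h_{n_{\rm b},n_{\rm m}}=\frac{\lambda}{4\pi r}e^{-{\rm j}\frac{2\pi}{\lambda}r_{n_{\rm b},n_{\rm m}}}$. Let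 $\eta=-\big(\frac1r+{\rm j}\frac{2\pi}{\lambda}\big)$. The channel derivatives under the uniform-amplitude approximation are the matrices with entries $[\mathbf{J}_x]_{n_{\rm b},n_{\rm m}}=\eta\frac{x+n_{\rm m}d_{\rm m}\cos\psi}{r}h_{n_{\rm b},n_{\rm m}}$, $[\mathbf{J}_y]_{n_{\rm b},n_{\rm m}}=\eta\frac{y+n_{\rm m}d_{\rm m}\sin\psi-n_{\rm b}d_{\rm b}}{r}h_{n_{\rm b},n_{\rm m}}$, and $\mathbf{J}_\psi=-d_{\rm m}\sin\psi\,\mathbf{J}_x\mathbf{D}_{N_{\rm m}}+d_{\rm m}\cos\psi\,\mathbf{J}_y\mathbf{D}_{N_{\rm m}}$, with $\mathbf{D}_{N_{\rm m}}=\mathrm{diag}(-\bar N_{\rm m},\dots,0,\dots,\bar N_{\rm m})$. $\mathbf{P}_{\mathbf{Q}}=\mathbf{Q}^{\mathsf H}(\mathbf{Q}\mathbf{Q}^{\mathsf H})^{-1}\mathbf{Q}$; $\|\cdot\|_{\mathsf F}$ is the Frobenius norm. *)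

theory Defs
  imports Complex_Main
    "Jordan_Normal_Form.Schur_Decomposition"
    "Jordan_Normal_Form.DL_Rank"
    "Jordan_Normal_Form.Gauss_Jordan_Elimination"
begin

text \<open>Geometry.  Array sizes are N = 2*Nbar+1.  The antenna index n ranges over
  -Nbar..Nbar; row/column i of a matrix (i = 0..N-1) corresponds to n = i - Nbar.\<close>

definition ant_idx :: "nat \<Rightarrow> nat \<Rightarrow> real" where
  "ant_idx Nbar i = real_of_int (int i - int Nbar)"

definition spacing :: "real \<Rightarrow> real" where
  "spacing lam = lam / 2"

definition aperture :: "real \<Rightarrow> nat \<Rightarrow> real" where
  "aperture lam Nbar = (real (2 * Nbar + 1) - 1) * spacing lam"

definition fresnel_dist :: "real \<Rightarrow> nat \<Rightarrow> real" where
  "fresnel_dist lam Nbb = 0.62 * sqrt (aperture lam Nbb ^ 3 / lam)"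

definition dist_r :: "real \<Rightarrow> real \<Rightarrow> real" where
  "dist_r x y = sqrt (x\<^sup>2 + y\<^sup>2)"

definition ant_dist :: "real \<Rightarrow> real \<Rightarrow> real \<Rightarrow> real \<Rightarrow> real \<Rightarrow> real \<Rightarrow> real" where
  "ant_dist lam x y psi nb nm =
     sqrt ((x + nm * spacing lam * cos psi)\<^sup>2 + (y + nm * spacing lam * sin psi - nb * spacing lam)\<^sup>2)"

definition chan :: "real \<Rightarrow> real \<Rightarrow> real \<Rightarrow> real \<Rightarrow> real \<Rightarrow> real \<Rightarrow> complex" where
  "chan lam x y psi nb nm =
     complex_of_real (lam / (4 * pi * dist_r x y)) *
     exp (- \<i> * complex_of_real (2 * pi / lam * ant_dist lam x y psi nb nm))"

definition eta :: "real \<Rightarrow> real \<Rightarrow> real \<Rightarrow> complex" where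
  "eta lam x y = - (complex_of_real (1 / dist_r x y) + \<i> * complex_of_real (2 * pi / lam))"

definition J_x :: "real \<Rightarrow> nat \<Rightarrow> nat \<Rightarrow> real \<Rightarrow> real \<Rightarrow> real \<Rightarrow> complex mat" where
  "J_x lam Nbb Nmb x y psi = mat (2 * Nbb + 1) (2 * Nmb + 1) (\<lambda>(i, j).
     let nb = ant_idx Nbb i; nm = ant_idx Nmb j in
     eta lam x y * complex_of_real ((x + nm * spacing lam * cos psi) / dist_r x y)
       * chan lam x y psi nb nm)"

definition J_y :: "real \<Rightarrow> nat \<Rightarrow> nat \<Rightarrow> real \<Rightarrow> real \<Rightarrow> real \<Rightarrow> complex mat" where
  "J_y lam Nbb Nmb x y psi = mat (2 * Nbb + 1) (2 * Nmb + 1) (\<lambda>(i, j).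
     let nb = ant_idx Nbb i; nm = ant_idx Nmb j in
     eta lam x y * complex_of_real ((y + nm * spacing lam * sin psi - nb * spacing lam) / dist_r x y)
       * chan lam x y psi nb nm)"

definition D_mat :: "nat \<Rightarrow> complex mat" where
  "D_mat Nmb = mat (2 * Nmb + 1) (2 * Nmb + 1)
     (\<lambda>(i, j). if i = j then complex_of_real (ant_idx Nmb i) else 0)"

definition J_psi :: "real \<Rightarrow> nat \<Rightarrow> nat \<Rightarrow> real \<Rightarrow> real \<Rightarrow> real \<Rightarrow> complex mat" where
  "J_psi lam Nbb Nmb x y psi =
     complex_of_real (- spacing lam * sin psi) \<cdot>\<^sub>m (J_x lam Nbb Nmb x y psi * D_mat Nmb)
     + complex_of_real (spacing lam * cos psi) \<cdot>\<^sub>m (J_y lam Nbb Nmb x y psi * D_mat Nmb)"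

definition frob_sq :: "complex mat \<Rightarrow> real" where
  "frob_sq A = (\<Sum>i<dim_row A. \<Sum>j<dim_col A. (cmod (A $$ (i, j)))\<^sup>2)"

definition proj_Q :: "complex mat \<Rightarrow> complex mat" where
  "proj_Q Q = mat_adjoint Q * the (mat_inverse (Q * mat_adjoint Q)) * Q"

definition full_row_rank :: "complex mat \<Rightarrow> bool" where
  "full_row_rank Q \<longleftrightarrow> vec_space.rank (dim_row Q) Q = dim_row Q"

end

theory Submission
  imports Defs
begin

(* Each entry of J_psi equals (eta h) (d n_m / r) (r sin(theta - psi) - n_b d cos psi), and |eta h| is
   the same for all antenna pairs.  Hence ||J_psi||_F^2 splits into power sums over the symmetric
   index ranges and equals the leading term times (1 + eta_corr) (1 + aperture_corr) exactly.
   Beyond the Fresnel distance lam^2 / r^2 <= 3 / Nbar_b^3, which makes both corrections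
   O(1 / N_b) once |sin(theta - psi)| >= c.  The Fisher bound holds because Q Q^H is invertible
   for Q of full row rank, so P_Q is an orthogonal projection and cannot increase the Frobenius norm. *)

section \<open>Adjoints and orthogonal projections\<close>

lemma dim_mat_adjoint [simp]:
  "dim_row (mat_adjoint A) = dim_col A" "dim_col (mat_adjoint A) = dim_row A"
  unfolding mat_adjoint_def by auto

lemma index_mat_adjoint [simp]:
  "i < dim_col A \<Longrightarrow> j < dim_row A \<Longrightarrow> mat_adjoint A $$ (i, j) = conjugate (A $$ (j, i))"
  unfolding mat_adjoint_def by (simp add: mat_of_rows_index)

lemma mat_adjoint_carrier [simp]: "A \<in> carrier_mat n m \<Longrightarrow> mat_adjoint A \<in> carrier_mat m n"
  by auto

lemma row_mat_adjoint:
  "i < dim_col A \<Longrightarrow> row (mat_adjoint A) i = conjugate (col A i)"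
  by (rule eq_vecI) auto

lemma mat_adjoint_adjoint [simp]: "mat_adjoint (mat_adjoint A) = A"
  by (rule eq_matI) auto

lemma mat_adjoint_one [simp]: "mat_adjoint (1\<^sub>m n :: complex mat) = 1\<^sub>m n"
  by (rule eq_matI) auto

lemma mat_adjoint_mult:
  fixes A :: "'a::conjugatable_field mat"
  assumes "A \<in> carrier_mat n k" "B \<in> carrier_mat k m"
  shows "mat_adjoint (A * B) = mat_adjoint B * mat_adjoint A"
proof (rule eq_matI)
  fix i j assume "i < dim_row (mat_adjoint B * mat_adjoint A)" "j < dim_col (mat_adjoint B * mat_adjoint A)"
  with assms show "mat_adjoint (A * B) $$ (i, j) = (mat_adjoint B * mat_adjoint A) $$ (i, j)"
    by (simp add: scalar_prod_def sum_conjugate conjugate_dist_mul mult.commute)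
qed (use assms in auto)

lemma conjugate_adjoint_mult_vec:
  assumes "A \<in> carrier_mat n m" "u \<in> carrier_vec n"
  shows "conjugate (mat_adjoint A *\<^sub>v u) = transpose_mat A *\<^sub>v conjugate u"
proof (rule eq_vecI)
  fix j assume "j < dim_vec (transpose_mat A *\<^sub>v conjugate u)"
  with assms show "conjugate (mat_adjoint A *\<^sub>v u) $ j = (transpose_mat A *\<^sub>v conjugate u) $ j"
    by (simp add: row_mat_adjoint conjugate_conjugate_sprod[of _ n])
qed (use assms in auto)

lemma adjoint_scalar_prod:
  fixes A :: "'a::conjugatable_field mat"
  assumes A: "A \<in> carrier_mat n m" and u: "u \<in> carrier_vec n" and w: "w \<in> carrier_vec m"
  shows "conjugate (mat_adjoint A *\<^sub>v u) \<bullet> w = conjugate u \<bullet> (A *\<^sub>v w)"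
  unfolding conjugate_adjoint_mult_vec[OF A u]
  by (rule transpose_vec_mult_scalar[OF A w]) (use u in simp)

lemma (in vec_space) full_rank_cols_span:
  assumes A: "A \<in> carrier_mat n nc" and rk: "rank A = n"
  shows "span (set (cols A)) = carrier_vec n"
proof -
  have cols: "set (cols A) \<subseteq> carrier_vec n" using A cols_dim by blast
  obtain S where S: "maximal S (\<lambda>T. T \<subseteq> set (cols A) \<and> lin_indpt T)"
    using maximal_exists[of "\<lambda>T. T \<subseteq> set (cols A) \<and> lin_indpt T" "card (set (cols A))" "{}"]
    by (meson List.finite_set card_mono empty_iff empty_subsetI finite_lin_indpt2 rev_finite_subset)
  then have S_cols: "S \<subseteq> set (cols A)" and li: "lin_indpt S" unfolding maximal_def by auto
  have "basis S"
  proof (rule dim_li_is_basis)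
    show "card S \<ge> dim" using rank_card_indpt[OF A S] rk dim_is_n by simp
  qed (use S_cols cols li finite_subset in auto)
  then have "carrier_vec n = span S" unfolding basis_def by auto
  also have "\<dots> \<subseteq> span (set (cols A))" by (rule span_is_monotone[OF S_cols])
  finally show ?thesis using span_closed[OF cols] by auto
qed

lemma adjoint_mult_vec_eq_0_imp_eq_0:
  fixes A :: "complex mat"
  assumes A: "A \<in> carrier_mat n m" and rk: "vec_space.rank n A = n"
    and v: "v \<in> carrier_vec n" and Av: "mat_adjoint A *\<^sub>v v = 0\<^sub>v m"
  shows "v = 0\<^sub>v n"
proof -
  interpret vec_space "TYPE(complex)" n .
  have cols: "set (cols A) \<subseteq> carrier_vec n" using A cols_dim by blast
  have "conjugate v \<bullet> w = 0" if "w \<in> set (cols A)" for w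
  proof -
    obtain j where j: "j < m" "w = col A j" using \<open>w \<in> set (cols A)\<close> A by (auto simp: cols_def)
    then have w: "w \<in> carrier_vec n" using A by simp
    have "conjugate v \<bullet> w = w \<bullet> conjugate v" using w v by (simp add: comm_scalar_prod[of _ n])
    also have "\<dots> = conjugate (conjugate w \<bullet> v)"
      using conjugate_sprod_vec[of "conjugate w" n v] w v by simp
    also have "conjugate w \<bullet> v = (mat_adjoint A *\<^sub>v v) $ j" using j A by (simp add: row_mat_adjoint)
    finally show ?thesis using Av j by simp
  qed
  then have "conjugate v \<in> orthogonal_complement (set (cols A))"
    using v unfolding orthogonal_complement_def by auto
  then have "conjugate v \<in> orthogonal_complement (carrier_vec n)"
    using in_orthogonal_complement_span[OF cols] full_rank_cols_span[OF A rk] by simp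
  then have "v \<bullet>c v = 0"
    using v unfolding orthogonal_complement_def by (simp add: conjugate_vec_sprod_comm[of _ n])
  then show ?thesis using v by simp
qed

lemma det_mult_adjoint_neq_0:
  fixes Q :: "complex mat"
  assumes Q: "Q \<in> carrier_mat k m" and rk: "vec_space.rank k Q = k"
  shows "det (Q * mat_adjoint Q) \<noteq> 0"
proof
  assume "det (Q * mat_adjoint Q) = 0"
  moreover have "Q * mat_adjoint Q \<in> carrier_mat k k" using Q by auto
  ultimately obtain v where v: "v \<in> carrier_vec k" "v \<noteq> 0\<^sub>v k" "(Q * mat_adjoint Q) *\<^sub>v v = 0\<^sub>v k"
    using det_0_iff_vec_prod_zero_field by blast
  define w where "w = mat_adjoint Q *\<^sub>v v"
  have w: "w \<in> carrier_vec m" unfolding w_def by (rule mult_mat_vec_carrier[OF mat_adjoint_carrier[OF Q] v(1)])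
  have "conjugate w \<bullet> w = conjugate v \<bullet> (Q *\<^sub>v w)"
    unfolding w_def by (rule adjoint_scalar_prod[OF Q v(1) w[unfolded w_def]])
  also have "Q *\<^sub>v w = 0\<^sub>v k"
    unfolding w_def using v(1,3) Q by (simp add: assoc_mult_mat_vec[symmetric, of _ k m _ k])
  finally have "w \<bullet>c w = 0"
    using v(1) w by (simp add: conjugate_vec_sprod_comm[of _ m])
  then have "mat_adjoint Q *\<^sub>v v = 0\<^sub>v m" using w unfolding w_def by simp
  then show False using adjoint_mult_vec_eq_0_imp_eq_0[OF Q rk v(1)] v(2) by simp
qed

lemma mat_inverse_mult_adjoint:
  fixes Q :: "complex mat"
  assumes Q: "Q \<in> carrier_mat k m" and fr: "full_row_rank Q"
  obtains B where "mat_inverse (Q * mat_adjoint Q) = Some B" "Q * mat_adjoint Q * B = 1\<^sub>m k"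
    "B \<in> carrier_mat k k"
proof -
  have G: "Q * mat_adjoint Q \<in> carrier_mat k k" using Q by auto
  have "vec_space.rank k Q = k" using fr Q unfolding full_row_rank_def by auto
  then have unit: "Q * mat_adjoint Q \<in> Units (ring_mat TYPE(complex) k ())"
    by (intro det_non_zero_imp_unit[OF G] det_mult_adjoint_neq_0[OF Q])
  show thesis
  proof (cases "mat_inverse (Q * mat_adjoint Q)")
    case None
    then show thesis using mat_inverse(1)[OF G None, of "()"] unit by simp
  next
    case (Some B)
    then show thesis using mat_inverse(2)[OF G Some] that by simp
  qed
qed

lemma
  fixes Q :: "complex mat"
  assumes Q: "Q \<in> carrier_mat k m" and fr: "full_row_rank Q"
  shows proj_Q_carrier: "proj_Q Q \<in> carrier_mat m m"
    and proj_Q_adjoint: "mat_adjoint (proj_Q Q) = proj_Q Q"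
    and proj_Q_idempotent: "proj_Q Q * proj_Q Q = proj_Q Q"
proof -
  define G where "G = Q * mat_adjoint Q"
  obtain B where B: "mat_inverse G = Some B" "G * B = 1\<^sub>m k" "B \<in> carrier_mat k k"
    using mat_inverse_mult_adjoint[OF Q fr] unfolding G_def .
  have QH: "mat_adjoint Q \<in> carrier_mat m k" using Q by simp
  have G_carrier: "G \<in> carrier_mat k k" unfolding G_def using Q by simp
  have G_adjoint: "mat_adjoint G = G"
    unfolding G_def using mat_adjoint_mult[OF Q QH] by simp
  have BH: "mat_adjoint B \<in> carrier_mat k k" using B(3) by simp
  have "mat_adjoint B * G = 1\<^sub>m k"
    using arg_cong[OF B(2), of mat_adjoint] mat_adjoint_mult[OF G_carrier B(3)] G_adjoint by simp
  then have B_adjoint: "mat_adjoint B = B"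
    using assoc_mult_mat[OF BH G_carrier B(3)] B(2,3) BH by simp
  define X where "X = mat_adjoint Q * B"
  have X: "X \<in> carrier_mat m k" unfolding X_def using QH B(3) by simp
  have P: "proj_Q Q = X * Q" unfolding proj_Q_def X_def using B(1) G_def by simp
  then show "proj_Q Q \<in> carrier_mat m m" using X Q by simp
  have "mat_adjoint X = B * Q"
    unfolding X_def using mat_adjoint_mult[OF QH B(3)] B_adjoint by simp
  then show "mat_adjoint (proj_Q Q) = proj_Q Q"
    unfolding P X_def using mat_adjoint_mult[OF X Q] assoc_mult_mat[OF QH B(3) Q] by (simp add: X_def)
  have "Q * X = 1\<^sub>m k" unfolding X_def using assoc_mult_mat[OF Q QH B(3)] B(2) G_def by simp
  then show "proj_Q Q * proj_Q Q = proj_Q Q"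
    unfolding P using assoc_mult_mat[OF X Q, of "X * Q" m] assoc_mult_mat[OF Q X Q] X Q by simp
qed

lemma cmod_add_squared: "(cmod (w + z))\<^sup>2 = (cmod w)\<^sup>2 + (cmod z)\<^sup>2 + 2 * Re (cnj w * z)"
  unfolding cmod_power2 by (simp add: algebra_simps power2_eq_square)

lemma norm_sq_mult_adjoint_idempotent_le:
  fixes P :: "complex mat"
  assumes P: "P \<in> carrier_mat n n" and P_adjoint: "mat_adjoint P = P" and P_idem: "P * P = P"
    and v: "v \<in> carrier_vec n"
  shows "(\<Sum>i<n. (cmod ((P *\<^sub>v v) $ i))\<^sup>2) \<le> (\<Sum>i<n. (cmod (v $ i))\<^sup>2)"
proof -
  define w where "w = P *\<^sub>v v"
  define z where "z = v - w"
  have w: "w \<in> carrier_vec n" and z: "z \<in> carrier_vec n" unfolding w_def z_def using P v by auto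
  have "P *\<^sub>v z = P *\<^sub>v v - (P * P) *\<^sub>v v"
    unfolding z_def w_def using P v by (simp add: mult_minus_distrib_mat_vec assoc_mult_mat_vec)
  then have "P *\<^sub>v z = 0\<^sub>v n" using P_idem P v by simp
  then have orth: "conjugate w \<bullet> z = 0"
    using adjoint_scalar_prod[OF P v z] P_adjoint v unfolding w_def by simp
  have "(\<Sum>i<n. (cmod (v $ i))\<^sup>2) = (\<Sum>i<n. (cmod (w $ i + z $ i))\<^sup>2)"
    unfolding z_def using v w by simp
  also have "\<dots> = (\<Sum>i<n. (cmod (w $ i))\<^sup>2) + (\<Sum>i<n. (cmod (z $ i))\<^sup>2) + 2 * Re (conjugate w \<bullet> z)"
    using w z by (simp add: cmod_add_squared sum.distrib sum_distrib_left scalar_prod_def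
        lessThan_atLeast0 Re_sum)
  finally show ?thesis using orth by (simp add: w_def[symmetric] sum_nonneg)
qed

lemma frob_sq_cols: "frob_sq A = (\<Sum>j<dim_col A. \<Sum>i<dim_row A. (cmod (col A j $ i))\<^sup>2)"
  unfolding frob_sq_def by (subst sum.swap) simp

lemma frob_sq_mult_adjoint_idempotent_le:
  fixes P :: "complex mat"
  assumes P: "P \<in> carrier_mat n n" and "mat_adjoint P = P" and "P * P = P"
    and J: "J \<in> carrier_mat n m"
  shows "frob_sq (P * J) \<le> frob_sq J"
proof -
  have "frob_sq (P * J) = (\<Sum>j<m. \<Sum>i<n. (cmod ((P *\<^sub>v col J j) $ i))\<^sup>2)"
    unfolding frob_sq_cols using P J by (simp add: col_mult2)
  also have "\<dots> \<le> (\<Sum>j<m. \<Sum>i<n. (cmod (col J j $ i))\<^sup>2)"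
    using J by (intro sum_mono norm_sq_mult_adjoint_idempotent_le[OF assms(1-3)]) simp
  also have "\<dots> = frob_sq J"
    unfolding frob_sq_cols using J by simp
  finally show ?thesis .
qed

lemma frob_sq_proj_Q_le:
  assumes "Q \<in> carrier_mat k n" "full_row_rank Q" "J \<in> carrier_mat n m"
  shows "frob_sq (proj_Q Q * J) \<le> frob_sq J"
  using frob_sq_mult_adjoint_idempotent_le[OF proj_Q_carrier[OF assms(1,2)] proj_Q_adjoint[OF assms(1,2)]
      proj_Q_idempotent[OF assms(1,2)] assms(3)] .

section \<open>The Frobenius norm of the channel derivative\<close>

lemma sum_sq_affine:
  "(\<Sum>i<M. (a + b * real i)\<^sup>2) =
     real M * a\<^sup>2 + a * b * real M * (real M - 1) + b\<^sup>2 * real M * (real M - 1) * (2 * real M - 1) / 6"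
  by (induction M) (simp_all add: power2_eq_square field_simps)

lemma sum_sq_ant_idx:
  "(\<Sum>i<2 * N + 1. (a - b * ant_idx N i)\<^sup>2)
     = real (2 * N + 1) * a\<^sup>2 + b\<^sup>2 * real N * (real N + 1) * real (2 * N + 1) / 3"
proof -
  have "(\<Sum>i<2 * N + 1. (a - b * ant_idx N i)\<^sup>2) = (\<Sum>i<2 * N + 1. ((a + b * real N) + (- b) * real i)\<^sup>2)"
    by (simp add: ant_idx_def algebra_simps)
  also have "\<dots> = real (2 * N + 1) * a\<^sup>2 + b\<^sup>2 * real N * (real N + 1) * real (2 * N + 1) / 3"
    unfolding sum_sq_affine by (simp add: power2_eq_square field_simps)
  finally show ?thesis .
qed

lemma sum_ant_idx_sq: "(\<Sum>i<2 * N + 1. (ant_idx N i)\<^sup>2) = real N * (real N + 1) * real (2 * N + 1) / 3"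
  using sum_sq_ant_idx[where a = 0 and b = 1]
  by (simp only: diff_0 mult_1_left power2_minus zero_power2 one_power2 mult_zero_right add_0_left)

lemma D_mat_carrier: "D_mat N \<in> carrier_mat (2 * N + 1) (2 * N + 1)"
  unfolding D_mat_def by simp

lemma index_mult_D_mat:
  assumes "A \<in> carrier_mat n (2 * N + 1)" "i < n" "j < 2 * N + 1"
  shows "(A * D_mat N) $$ (i, j) = A $$ (i, j) * complex_of_real (ant_idx N j)"
proof -
  have "(A * D_mat N) $$ (i, j) = (\<Sum>l<2 * N + 1. A $$ (i, l) * D_mat N $$ (l, j))"
    using assms D_mat_carrier[of N] by (simp add: scalar_prod_def lessThan_atLeast0)
  also have "\<dots> = A $$ (i, j) * complex_of_real (ant_idx N j)"
    using assms(3) by (simp add: D_mat_def if_distrib cong: if_cong)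
  finally show ?thesis .
qed

lemma J_x_carrier: "J_x lam Nbb Nmb x y psi \<in> carrier_mat (2 * Nbb + 1) (2 * Nmb + 1)"
  unfolding J_x_def by simp

lemma J_y_carrier: "J_y lam Nbb Nmb x y psi \<in> carrier_mat (2 * Nbb + 1) (2 * Nmb + 1)"
  unfolding J_y_def by simp

lemma J_psi_carrier: "J_psi lam Nbb Nmb x y psi \<in> carrier_mat (2 * Nbb + 1) (2 * Nmb + 1)"
  unfolding J_psi_def using J_x_carrier J_y_carrier D_mat_carrier
  by (meson add_carrier_mat mult_carrier_mat smult_carrier_mat)

lemma index_J_psi:
  assumes i: "i < 2 * Nbb + 1" and j: "j < 2 * Nmb + 1"
  shows "J_psi lam Nbb Nmb x y psi $$ (i, j) =
    eta lam x y * chan lam x y psi (ant_idx Nbb i) (ant_idx Nmb j)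
    * complex_of_real (spacing lam * ant_idx Nmb j / dist_r x y
        * (cos psi * y - sin psi * x - spacing lam * cos psi * ant_idx Nbb i))"
proof -
  have x: "(J_x lam Nbb Nmb x y psi * D_mat Nmb) $$ (i, j) = eta lam x y
      * complex_of_real ((x + ant_idx Nmb j * spacing lam * cos psi) / dist_r x y)
      * chan lam x y psi (ant_idx Nbb i) (ant_idx Nmb j) * complex_of_real (ant_idx Nmb j)"
    using index_mult_D_mat[OF J_x_carrier i j] i j by (simp add: J_x_def Let_def)
  have y: "(J_y lam Nbb Nmb x y psi * D_mat Nmb) $$ (i, j) = eta lam x y
      * complex_of_real ((y + ant_idx Nmb j * spacing lam * sin psi - ant_idx Nbb i * spacing lam) / dist_r x y)
      * chan lam x y psi (ant_idx Nbb i) (ant_idx Nmb j) * complex_of_real (ant_idx Nmb j)"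
    using index_mult_D_mat[OF J_y_carrier i j] i j by (simp add: J_y_def Let_def)
  have "J_psi lam Nbb Nmb x y psi $$ (i, j) =
      complex_of_real (- spacing lam * sin psi) * (J_x lam Nbb Nmb x y psi * D_mat Nmb) $$ (i, j)
      + complex_of_real (spacing lam * cos psi) * (J_y lam Nbb Nmb x y psi * D_mat Nmb) $$ (i, j)"
  proof -
    have Ax: "J_x lam Nbb Nmb x y psi * D_mat Nmb \<in> carrier_mat (2 * Nbb + 1) (2 * Nmb + 1)"
      and Ay: "J_y lam Nbb Nmb x y psi * D_mat Nmb \<in> carrier_mat (2 * Nbb + 1) (2 * Nmb + 1)"
      using J_x_carrier J_y_carrier D_mat_carrier by (meson mult_carrier_mat)+
    show ?thesis unfolding J_psi_def using i j carrier_matD[OF Ax] carrier_matD[OF Ay] by simp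
  qed
  also have "\<dots> = eta lam x y * chan lam x y psi (ant_idx Nbb i) (ant_idx Nmb j)
    * complex_of_real (spacing lam * ant_idx Nmb j / dist_r x y
        * (cos psi * y - sin psi * x - spacing lam * cos psi * ant_idx Nbb i))"
    unfolding x y by (simp add: algebra_simps diff_divide_distrib add_divide_distrib)
  finally show ?thesis .
qed

(* |eta|^2 = (2 pi / lam)^2 (1 + eta_corr lam r) *)
definition eta_corr :: "real \<Rightarrow> real \<Rightarrow> real" where
  "eta_corr lam r = lam\<^sup>2 / (4 * pi\<^sup>2 * r\<^sup>2)"

(* sum over n_b of (r s - n_b d cos psi)^2 = N_b (r s)^2 (1 + aperture_corr lam Nbar_b r psi s) *)
definition aperture_corr :: "real \<Rightarrow> nat \<Rightarrow> real \<Rightarrow> real \<Rightarrow> real \<Rightarrow> real" where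
  "aperture_corr lam Nbb r psi s = (spacing lam * cos psi)\<^sup>2 * real Nbb * (real Nbb + 1) / (3 * r\<^sup>2 * s\<^sup>2)"

lemma cmod_eta_mult_chan_sq:
  assumes "lam > 0" "dist_r x y > 0"
  shows "(cmod (eta lam x y * chan lam x y psi nb nm))\<^sup>2
    = (1 + eta_corr lam (dist_r x y)) / (4 * (dist_r x y)\<^sup>2)"
proof -
  have "cmod (exp (- \<i> * complex_of_real t)) = 1" for t by (simp add: norm_exp_eq_Re)
  then have chan: "cmod (chan lam x y psi nb nm) = lam / (4 * pi * dist_r x y)"
    unfolding chan_def norm_mult norm_of_real using assms by simp
  have eta: "(cmod (eta lam x y))\<^sup>2 = 1 / (dist_r x y)\<^sup>2 + (2 * pi / lam)\<^sup>2"
    unfolding eta_def cmod_power2 by (simp add: power_divide)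
  have "(cmod (eta lam x y * chan lam x y psi nb nm))\<^sup>2
      = (1 / (dist_r x y)\<^sup>2 + (2 * pi / lam)\<^sup>2) * (lam / (4 * pi * dist_r x y))\<^sup>2"
    by (simp only: norm_mult power_mult_distrib eta chan)
  also have "\<dots> = (1 + eta_corr lam (dist_r x y)) / (4 * (dist_r x y)\<^sup>2)"
    unfolding eta_corr_def using assms by (simp add: field_simps power2_eq_square)
  finally show ?thesis .
qed

lemma cmod_J_psi_sq:
  assumes "lam > 0" "dist_r x y > 0" "i < 2 * Nbb + 1" "j < 2 * Nmb + 1"
  shows "(cmod (J_psi lam Nbb Nmb x y psi $$ (i, j)))\<^sup>2 =
    (1 + eta_corr lam (dist_r x y)) / (4 * (dist_r x y)\<^sup>2) * (spacing lam / dist_r x y)\<^sup>2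
    * (ant_idx Nmb j)\<^sup>2 * (cos psi * y - sin psi * x - spacing lam * cos psi * ant_idx Nbb i)\<^sup>2"
  unfolding index_J_psi[OF assms(3,4)]
    norm_mult[of "eta lam x y * chan lam x y psi (ant_idx Nbb i) (ant_idx Nmb j)"]
    norm_of_real power_mult_distrib power2_abs cmod_eta_mult_chan_sq[OF assms(1,2)]
  by (simp add: power_mult_distrib power_divide)

lemma frob_sq_J_psi:
  assumes "lam > 0" "dist_r x y > 0"
  shows "frob_sq (J_psi lam Nbb Nmb x y psi) =
    (1 + eta_corr lam (dist_r x y)) / (4 * (dist_r x y)\<^sup>2) * (spacing lam / dist_r x y)\<^sup>2
    * (real (2 * Nbb + 1) * (cos psi * y - sin psi * x)\<^sup>2
       + (spacing lam * cos psi)\<^sup>2 * real Nbb * (real Nbb + 1) * real (2 * Nbb + 1) / 3)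
    * (real Nmb * (real Nmb + 1) * real (2 * Nmb + 1) / 3)"
proof -
  let ?K = "(1 + eta_corr lam (dist_r x y)) / (4 * (dist_r x y)\<^sup>2) * (spacing lam / dist_r x y)\<^sup>2"
  let ?g = "cos psi * y - sin psi * x" and ?t = "spacing lam * cos psi"
  have "frob_sq (J_psi lam Nbb Nmb x y psi)
      = (\<Sum>i<2 * Nbb + 1. \<Sum>j<2 * Nmb + 1. ?K * (ant_idx Nmb j)\<^sup>2 * (?g - ?t * ant_idx Nbb i)\<^sup>2)"
    unfolding frob_sq_def using J_psi_carrier[of lam Nbb Nmb x y psi] cmod_J_psi_sq[OF assms]
    by (intro sum.cong) auto
  also have "\<dots> = (\<Sum>i<2 * Nbb + 1. \<Sum>j<2 * Nmb + 1. ?K * ((?g - ?t * ant_idx Nbb i)\<^sup>2 * (ant_idx Nmb j)\<^sup>2))"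
    by (intro sum.cong refl) (simp only: mult_ac)
  also have "\<dots> = ?K * ((\<Sum>i<2 * Nbb + 1. (?g - ?t * ant_idx Nbb i)\<^sup>2) * (\<Sum>j<2 * Nmb + 1. (ant_idx Nmb j)\<^sup>2))"
    by (subst sum_product) (simp only: sum_distrib_left)
  also have "\<dots> = ?K * ((real (2 * Nbb + 1) * ?g\<^sup>2 + ?t\<^sup>2 * real Nbb * (real Nbb + 1) * real (2 * Nbb + 1) / 3)
      * (real Nmb * (real Nmb + 1) * real (2 * Nmb + 1) / 3))"
    by (simp only: sum_sq_ant_idx sum_ant_idx_sq)
  finally show ?thesis by (simp only: mult.assoc)
qed

lemma frob_sq_J_psi_polar:
  assumes lam: "lam > 0" and r: "dist_r x y > 0"
    and x: "x = dist_r x y * cos theta" and y: "y = dist_r x y * sin theta"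
    and s: "sin (theta - psi) \<noteq> 0" and Nmb: "Nmb \<ge> 1"
  shows "frob_sq (J_psi lam Nbb Nmb x y psi) =
    real (2 * Nbb + 1) * real (2 * Nmb + 1) * (aperture lam Nmb * \<bar>sin (theta - psi)\<bar>)\<^sup>2 / (48 * (dist_r x y)\<^sup>2)
      * (1 + 2 / (real (2 * Nmb + 1) - 1))
      * ((1 + eta_corr lam (dist_r x y)) * (1 + aperture_corr lam Nbb (dist_r x y) psi (sin (theta - psi))))"
proof -
  have "cos psi * y - sin psi * x = dist_r x y * sin (theta - psi)"
    by (subst x, subst y) (simp add: sin_diff algebra_simps)
  moreover have "aperture lam Nmb = 2 * real Nmb * spacing lam"
    unfolding aperture_def by simp
  ultimately show ?thesis
    unfolding frob_sq_J_psi[OF lam r] aperture_corr_def using r s Nmb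
    by (simp add: field_simps power2_eq_square power_mult_distrib)
qed

section \<open>Size of the corrections\<close>

lemma beyond_fresnel_dist:
  assumes lam: "lam > 0" and r: "r > fresnel_dist lam Nbb"
  shows "lam\<^sup>2 / r\<^sup>2 * real Nbb ^ 3 \<le> 3"
proof -
  have "aperture lam Nbb ^ 3 / lam = (real Nbb ^ 3 * lam) * lam"
    unfolding aperture_def spacing_def using lam by (simp add: power3_eq_cube)
  then have "fresnel_dist lam Nbb = 0.62 * sqrt (real Nbb ^ 3 * lam\<^sup>2)"
    unfolding fresnel_dist_def by (simp add: power2_eq_square)
  then have "0.62 * sqrt (real Nbb ^ 3 * lam\<^sup>2) < r" using r by simp
  moreover have "sqrt (real Nbb ^ 3 * lam\<^sup>2) \<ge> 0" by simp
  ultimately have "(0.62 * sqrt (real Nbb ^ 3 * lam\<^sup>2))\<^sup>2 < r\<^sup>2"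
    by (intro power_strict_mono) auto
  moreover have "(sqrt (real Nbb ^ 3 * lam\<^sup>2))\<^sup>2 = real Nbb ^ 3 * lam\<^sup>2" by simp
  ultimately have "961 / 2500 * (real Nbb ^ 3 * lam\<^sup>2) < r\<^sup>2"
    by (simp only: power_mult_distrib) (simp add: power2_eq_square)
  moreover have "0 \<le> real Nbb ^ 3 * lam\<^sup>2" by simp
  ultimately have "0 < r\<^sup>2" "real Nbb ^ 3 * lam\<^sup>2 \<le> 3 * r\<^sup>2" by linarith+
  then show ?thesis by (simp add: field_simps)
qed

lemma eta_corr_bounds: "0 \<le> eta_corr lam r" "eta_corr lam r \<le> lam\<^sup>2 / r\<^sup>2"
proof -
  show "0 \<le> eta_corr lam r" unfolding eta_corr_def by simp
  have "2 * 2 \<le> pi * pi" using pi_ge_two by (intro mult_mono) auto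
  then have "1 \<le> 4 * pi\<^sup>2" by (simp add: power2_eq_square)
  then show "eta_corr lam r \<le> lam\<^sup>2 / r\<^sup>2"
    unfolding eta_corr_def by (cases "r = 0") (simp_all add: frac_le)
qed

lemma aperture_corr_bounds:
  assumes c: "c > 0" "c \<le> \<bar>s\<bar>"
  shows "0 \<le> aperture_corr lam Nbb r psi s"
    and "aperture_corr lam Nbb r psi s \<le> lam\<^sup>2 / r\<^sup>2 * real Nbb ^ 2 / (6 * c\<^sup>2)"
proof -
  show "0 \<le> aperture_corr lam Nbb r psi s" unfolding aperture_corr_def by simp
  show "aperture_corr lam Nbb r psi s \<le> lam\<^sup>2 / r\<^sup>2 * real Nbb ^ 2 / (6 * c\<^sup>2)"
  proof (cases "r = 0")
    case False
    have "c\<^sup>2 \<le> s\<^sup>2" using c abs_le_square_iff by fastforce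
    then have den: "3 * r\<^sup>2 * c\<^sup>2 \<le> 3 * r\<^sup>2 * s\<^sup>2" by (simp add: mult_left_mono)
    have "(cos psi)\<^sup>2 \<le> 1" by (simp add: abs_square_le_1)
    then have "(spacing lam * cos psi)\<^sup>2 \<le> lam\<^sup>2 / 4"
      unfolding spacing_def power_mult_distrib by (simp add: power_divide mult_left_le)
    moreover have "real Nbb * (real Nbb + 1) \<le> 2 * real Nbb ^ 2"
      by (cases Nbb) (simp_all add: power2_eq_square)
    ultimately have num: "(spacing lam * cos psi)\<^sup>2 * (real Nbb * (real Nbb + 1)) \<le> lam\<^sup>2 / 4 * (2 * real Nbb ^ 2)"
      by (rule mult_mono) auto
    have "aperture_corr lam Nbb r psi s \<le> (spacing lam * cos psi)\<^sup>2 * (real Nbb * (real Nbb + 1)) / (3 * r\<^sup>2 * c\<^sup>2)"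
      unfolding aperture_corr_def using den c False by (simp add: mult.assoc frac_le)
    also have "\<dots> \<le> lam\<^sup>2 / 4 * (2 * real Nbb ^ 2) / (3 * r\<^sup>2 * c\<^sup>2)"
      using num c by (intro divide_right_mono) auto
    also have "\<dots> = lam\<^sup>2 / r\<^sup>2 * real Nbb ^ 2 / (6 * c\<^sup>2)"
      using c False by (simp add: field_simps power2_eq_square)
    finally show ?thesis .
  qed (simp add: aperture_corr_def)
qed

lemma relative_error_bound:
  fixes a b q n c :: real
  assumes a: "0 \<le> a" "a \<le> q" and b: "0 \<le> b" "b \<le> q * n\<^sup>2 / (6 * c\<^sup>2)"
    and q: "q * n ^ 3 \<le> 3" and n: "n \<ge> 1" and c: "c > 0"
  shows "\<bar>(1 + a) * (1 + b) - 1\<bar> \<le> (9 + 6 / c\<^sup>2) / (2 * n + 1)"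
proof -
  have "q * n\<^sup>2 * n \<le> 3" using q by (simp add: power3_eq_cube power2_eq_square mult_ac)
  then have qn2: "q * n\<^sup>2 \<le> 3 / n" using n by (simp add: field_simps)
  have "q * 1 \<le> q * n\<^sup>2" using a n by (intro mult_left_mono) (auto simp: one_le_power)
  then have "q \<le> 3 / n" using qn2 by simp
  moreover have "3 / n \<le> 3" using n by (simp add: field_simps)
  ultimately have a_le: "a \<le> 3 / n" "a \<le> 3" using a by linarith+
  have "b \<le> (3 / n) / (6 * c\<^sup>2)" using b(2) divide_right_mono[OF qn2, of "6 * c\<^sup>2"] by simp
  then have b_le: "b \<le> 1 / (2 * c\<^sup>2 * n)" using n c by (simp add: field_simps)
  have "(1 + a) * (1 + b) - 1 = a + b * (1 + a)" by (simp add: algebra_simps)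
  also have "\<dots> \<le> 3 / n + 1 / (2 * c\<^sup>2 * n) * 4"
    using a_le b_le a b n c by (intro add_mono mult_mono) auto
  also have "\<dots> = (3 + 2 / c\<^sup>2) * (1 / n)" using n c by (simp add: field_simps)
  also have "\<dots> \<le> (3 + 2 / c\<^sup>2) * (3 / (2 * n + 1))"
    using n by (intro mult_left_mono) (auto simp: field_simps)
  also have "\<dots> = (9 + 6 / c\<^sup>2) / (2 * n + 1)" by (simp add: field_simps)
  finally have "(1 + a) * (1 + b) - 1 \<le> (9 + 6 / c\<^sup>2) / (2 * n + 1)" .
  moreover have "0 \<le> (1 + a) * (1 + b) - 1" using a b by (simp add: algebra_simps)
  ultimately show ?thesis by simp
qed

lemma corrections_bound:
  assumes "lam > 0" "Nbb \<ge> 1" "r > fresnel_dist lam Nbb" "c > 0" "c \<le> \<bar>s\<bar>"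
  shows "\<bar>(1 + eta_corr lam r) * (1 + aperture_corr lam Nbb r psi s) - 1\<bar>
    \<le> (9 + 6 / c\<^sup>2) / real (2 * Nbb + 1)"
proof -
  have "\<bar>(1 + eta_corr lam r) * (1 + aperture_corr lam Nbb r psi s) - 1\<bar>
      \<le> (9 + 6 / c\<^sup>2) / (2 * real Nbb + 1)"
    using assms
    by (intro relative_error_bound[where q = "lam\<^sup>2 / r\<^sup>2"] eta_corr_bounds
        aperture_corr_bounds[OF assms(4,5)] beyond_fresnel_dist[OF assms(1,3)]) auto
  then show ?thesis by (simp add: add.commute)
qed

theorem proposition4:
  fixes c :: real
  assumes "c > 0"
  shows "\<exists>C::real. \<forall>(lam::real) (Nbb::nat) (Nmb::nat) (x::real) (y::real) (psi::real) (theta::real).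
    (lam > 0 \<and> Nbb \<ge> 1 \<and> Nmb \<ge> 1 \<and> dist_r x y > 0
     \<and> x = dist_r x y * cos theta \<and> y = dist_r x y * sin theta
     \<and> aperture lam Nmb < aperture lam Nbb
     \<and> dist_r x y > fresnel_dist lam Nbb
     \<and> \<bar>sin (theta - psi)\<bar> \<ge> c) \<longrightarrow>
    (let Nb = real (2 * Nbb + 1); Nm = real (2 * Nmb + 1); r = dist_r x y;
         Deff = aperture lam Nmb * \<bar>sin (theta - psi)\<bar>;
         J = J_psi lam Nbb Nmb x y psi in
     \<exists>\<epsilon>::real. \<bar>\<epsilon>\<bar> \<le> C / Nb
       \<and> frob_sq J = Nb * Nm * Deff\<^sup>2 / (48 * r\<^sup>2) * (1 + 2 / (Nm - 1)) * (1 + \<epsilon>)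
       \<and> (\<forall>(Q::complex mat) (Nrf::nat) (Pm::real) (s2::real).
            Q \<in> carrier_mat Nrf (2 * Nbb + 1) \<and> full_row_rank Q \<and> Pm > 0 \<and> s2 > 0 \<longrightarrow>
            2 * Pm / (s2 * Nm) * frob_sq (proj_Q Q * J) \<le> 2 * Pm / (s2 * Nm) * frob_sq J
            \<and> 2 * Pm / (s2 * Nm) * frob_sq J
                = Pm * Nb * Deff\<^sup>2 / (24 * s2 * r\<^sup>2) * (1 + 2 / (Nm - 1)) * (1 + \<epsilon>)))"
proof (intro exI[of _ "9 + 6 / c\<^sup>2"] allI impI, unfold Let_def, goal_cases)
  case (1 lam Nbb Nmb x y psi theta)
  then have lam: "lam > 0" and Nbb: "Nbb \<ge> 1" and Nmb: "Nmb \<ge> 1" and r: "dist_r x y > 0"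
    and x: "x = dist_r x y * cos theta" and y: "y = dist_r x y * sin theta"
    and fresnel: "dist_r x y > fresnel_dist lam Nbb" and s: "\<bar>sin (theta - psi)\<bar> \<ge> c"
    by auto
  let ?Nb = "real (2 * Nbb + 1)" and ?Nm = "real (2 * Nmb + 1)" and ?r = "dist_r x y"
    and ?Deff = "aperture lam Nmb * \<bar>sin (theta - psi)\<bar>" and ?J = "J_psi lam Nbb Nmb x y psi"
  define \<epsilon> where "\<epsilon> = (1 + eta_corr lam ?r) * (1 + aperture_corr lam Nbb ?r psi (sin (theta - psi))) - 1"
  have error: "\<bar>\<epsilon>\<bar> \<le> (9 + 6 / c\<^sup>2) / ?Nb"
    unfolding \<epsilon>_def by (rule corrections_bound[OF lam Nbb fresnel assms s])
  have "sin (theta - psi) \<noteq> 0" using s assms by auto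
  then have frob: "frob_sq ?J = ?Nb * ?Nm * ?Deff\<^sup>2 / (48 * ?r\<^sup>2) * (1 + 2 / (?Nm - 1)) * (1 + \<epsilon>)"
    unfolding \<epsilon>_def using frob_sq_J_psi_polar[OF lam r x y _ Nmb] by simp
  have projected: "2 * Pm / (s2 * ?Nm) * frob_sq (proj_Q Q * ?J) \<le> 2 * Pm / (s2 * ?Nm) * frob_sq ?J"
    if "Q \<in> carrier_mat Nrf (2 * Nbb + 1)" "full_row_rank Q" "Pm > 0" "s2 > 0" for Q Nrf Pm s2
    using frob_sq_proj_Q_le[OF that(1,2) J_psi_carrier] that by (intro mult_left_mono) auto
  have scale: "2 * Pm / (s2 * Nm) * (Nb * Nm * D / (48 * r\<^sup>2) * F * G)
      = Pm * Nb * D / (24 * s2 * r\<^sup>2) * F * G"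
    if "s2 > 0" "r > 0" "Nm > 0" for Pm s2 Nm Nb D F G r :: real
    using that by (simp add: field_simps)
  have fisher: "2 * Pm / (s2 * ?Nm) * frob_sq ?J
      = Pm * ?Nb * ?Deff\<^sup>2 / (24 * s2 * ?r\<^sup>2) * (1 + 2 / (?Nm - 1)) * (1 + \<epsilon>)"
    if "s2 > 0" for Pm s2
    unfolding frob by (rule scale) (use that r in simp_all)
  show ?case using error frob projected fisher by blast
qed

end
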